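(* Let $n\ge 2$, $k \in \{1,\ldots,n\}$, $R >0$ and $h,h^* \in [0,\infty)$ satisfy \[ hR < k, \qquad h^* \ge \max \left\{ h, \frac{h}{k-hR}\right\}. \] Let $\xi \in C((0,\infty))$ be non-increasing, non-negative and such that $\int_{0^+} t^{k-1}\xi(t)\, \mathrm{d} t < \infty$, and let $\psi \in C^2((0,R))$ solve \[ \big(t^{k-1}e^{-h^*t}\psi'\big)' = e^{-h^*t} t^{k-1} \xi \quad \text{on } (0, R), \qquad \lim_{t \to 0}\big(t^{k-1}\psi'(t)\big) = 0. \] Fix $x_0 \in \mathbb{R}^n$, set $r(x)=|x-x_0|$ and $w(x) = \psi(r(x))$. Then \[ \mathcal{P}_k^-(\nabla^2 w) - h|\nabla w| \ge \frac{\xi(r)}{1+h^*R} \qquad \text{pointwise on } B_{R}(x_0) \setminus \{x_0\}. \] Moreover, provided that $\xi \in C([0,\infty))$, $w$ (extended at $x_0$ by continuity) belongs to $C^2(B_R(x_0))$ and the inequality holds pointwise on the entire ball $B_R(x_0)$.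
   Context: For a symmetric matrix $A$ with eigenvalues $\lambda_1(A)\le\dots\le\lambda_n(A)$, $\mathcal{P}_k^-(A)=\lambda_1(A)+\dots+\lambda_k(A)$; $\nabla^2 w$ is the Hessian of $w$. *)

theory Defs
  imports "HOL-Analysis.Analysis" "HOL-Computational_Algebra.Polynomial"
begin

definition charpoly :: "real^'n^'n \<Rightarrow> real poly" where
  "charpoly A = det (\<chi> i j. if i = j then [:- (A$i$j), 1:] else [:- (A$i$j):])"

definition eig_list :: "real^'n^'n \<Rightarrow> real list" where
  "eig_list A = (THE L. sorted L \<and> length L = CARD('n) \<and>
                    (\<forall>a. count_list L a = order a (charpoly A)))"

definition Pk_minus :: "nat \<Rightarrow> real^'n^'n \<Rightarrow> real" where
  "Pk_minus k A = sum_list (take k (eig_list A))"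

definition grad :: "(real^'n \<Rightarrow> real) \<Rightarrow> real^'n \<Rightarrow> real^'n" where
  "grad w x = (\<chi> i. frechet_derivative w (at x) (axis i 1))"

definition hess :: "(real^'n \<Rightarrow> real) \<Rightarrow> real^'n \<Rightarrow> real^'n^'n" where
  "hess w x = (\<chi> i j. frechet_derivative (\<lambda>y. grad w y $ j) (at x) (axis i 1))"

definition C2_on :: "(real^'n) set \<Rightarrow> (real^'n \<Rightarrow> real) \<Rightarrow> bool" where
  "C2_on S w \<longleftrightarrow> (\<forall>x\<in>S. w differentiable (at x)) \<and>
                  (\<forall>x\<in>S. (grad w) differentiable (at x)) \<and>
                  continuous_on S (hess w)"

end

theory Submission
  imports Defs
begin

text \<open>
  Away from \<open>x\<^sub>0\<close>, the Hessian of \<open>\<psi>(r)\<close> has the eigenvalue \<open>\<psi>''(r)\<close> in the radial direction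
  and \<open>\<psi>'(r)/r\<close> with multiplicity \<open>n - 1\<close>, so \<open>P\<^sub>k\<^sup>-\<close> is at least
  \<open>min (\<psi>'' + (k-1) \<psi>'/r) (k \<psi>'/r)\<close>, while \<open>|\<nabla>w| = \<psi>'\<close>. The ODE turns
  \<open>\<psi>'' + (k-1) \<psi>'/r\<close> into \<open>\<xi> + h\<^sup>* \<psi>'\<close>, and integrating it from \<open>0\<close> against the
  non-increasing \<open>\<xi>\<close> gives \<open>\<xi>(r) r/k \<le> \<psi>'(r) \<le> \<xi>(0) exp (h\<^sup>* r) r/k\<close>. The lower bound
  absorbs the drift \<open>h |\<nabla>w|\<close> as soon as \<open>h\<^sup>* \<ge> max h (h/(k - hR))\<close>.
  If \<open>\<xi>\<close> is continuous at \<open>0\<close>, the two bounds force \<open>\<psi>'(r)/r\<close>, and with the ODE also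
  \<open>\<psi>''(r)\<close>, to tend to \<open>\<xi>(0)/k\<close>; so \<open>w\<close> extends to a \<open>C\<^sup>2\<close> function whose Hessian at
  \<open>x\<^sub>0\<close> is \<open>\<xi>(0)/k\<close> times the identity.
\<close>

section \<open>Spectrum of radial matrices\<close>

lemma poly_det: "poly (det P) c = det (\<chi> i j. poly (P$i$j) c)"
  unfolding det_def by (simp add: poly_sum poly_prod)

lemma poly_charpoly: "poly (charpoly A) c = det (mat c - A)"
  unfolding charpoly_def poly_det
  by (rule arg_cong[where f=det]) (auto simp: mat_def vec_eq_iff)

lemma eig_list_eqI:
  fixes A :: "real^'n^'n"
  assumes "sorted L" "length L = CARD('n)" "\<And>x. count_list L x = order x (charpoly A)"
  shows "eig_list A = L"
  unfolding eig_list_def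
proof (rule the_equality)
  fix L'
  assume L': "sorted L' \<and> length L' = CARD('n) \<and> (\<forall>x. count_list L' x = order x (charpoly A))"
  then have "mset L' = mset L"
    by (simp add: multiset_eq_iff count_mset assms(3))
  then show "L' = L"
    by (metis L' assms(1) properties_for_sort sorted_sort_id)
qed (use assms in auto)

text \<open>The matrix \<open>b I + (a - b) e e\<^sup>T\<close>: eigenvalue \<open>a\<close> along the unit vector \<open>e\<close>, \<open>b\<close> on its
  orthogonal complement. It is the shape of the Hessian of a radial function.\<close>

definition radial_matrix :: "real \<Rightarrow> real \<Rightarrow> real^'n \<Rightarrow> real^'n^'n" where
  "radial_matrix a b e = (\<chi> i j. b * (if i = j then 1 else 0) + (a - b) * e$i * e$j)"

lemma radial_matrix_same: "radial_matrix c c e = mat c"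
  by (simp add: radial_matrix_def mat_def vec_eq_iff)

lemma det_radial_matrix:
  fixes e :: "real^'n"
  assumes "norm e = 1"
  shows "det (mat c - radial_matrix a b e) = (c - a) * (c - b) ^ (CARD('n) - 1)"
proof -
  obtain i0 :: 'n where True by blast
  obtain Q where Q: "orthogonal_matrix Q" and Qi0: "Q *v axis i0 1 = e"
    using orthogonal_matrix_exists_basis[OF assms] by metis
  have col: "Q$i$i0 = e$i" for i
    using Qi0 by (simp add: vec_eq_iff matrix_vector_mult_def axis_def if_distrib cong: if_cong)
  have orth: "(\<Sum>l\<in>UNIV. Q$i$l * Q$j$l) = (if i = j then 1 else 0)" for i j
  proof -
    have "(Q ** transpose Q)$i$j = mat 1 $i$j" using Q by (simp add: orthogonal_matrix_def)
    then show ?thesis by (simp add: matrix_matrix_mult_def transpose_def mat_def)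
  qed
  define d where "d l = (c - b) + (if l = i0 then b - a else 0)" for l
  define D where "D = (\<chi> i j. if i = j then d i else (0::real))"
  have "(Q ** D ** transpose Q)$i$j = (mat c - radial_matrix a b e)$i$j" for i j
  proof -
    have "(Q ** D ** transpose Q)$i$j = (\<Sum>l\<in>UNIV. Q$i$l * d l * Q$j$l)"
      by (simp add: matrix_matrix_mult_def transpose_def D_def if_distrib sum.If_cases
          cong: if_cong)
    also have "\<dots> = (\<Sum>l\<in>UNIV. (c - b) * (Q$i$l * Q$j$l)
        + (if l = i0 then (b - a) * (Q$i$l * Q$j$l) else 0))"
      by (rule sum.cong) (auto simp: d_def algebra_simps)
    also have "\<dots> = (c - b) * (\<Sum>l\<in>UNIV. Q$i$l * Q$j$l) + (b - a) * (Q$i$i0 * Q$j$i0)"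
      by (simp add: sum.distrib sum_distrib_left)
    finally show ?thesis
      by (simp add: orth col radial_matrix_def mat_def algebra_simps)
  qed
  then have "Q ** D ** transpose Q = mat c - radial_matrix a b e"
    by (simp add: vec_eq_iff)
  then have "det (mat c - radial_matrix a b e) = det D * (det Q * det Q)"
    by (metis det_mul det_transpose mult.commute mult.left_commute)
  also have "det Q * det Q = 1"
    using det_orthogonal_matrix[OF Q] by auto
  also have "det D = d i0 * (\<Prod>i\<in>UNIV - {i0}. d i)"
    by (simp add: D_def det_diagonal prod.remove)
  finally show ?thesis
    by (simp add: d_def card_Diff_singleton)
qed

lemma eig_list_radial_matrix:
  fixes e :: "real^'n"
  assumes "norm e = 1"
  shows "eig_list (radial_matrix a b e) = sort (a # replicate (CARD('n) - 1) b)"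
proof (rule eig_list_eqI)
  let ?p = "[:-a, 1:] * [:-b, 1:] ^ (CARD('n) - 1)"
  have "charpoly (radial_matrix a b e) = ?p"
    by (rule poly_eq_poly_eq_iff[THEN iffD1])
       (simp add: fun_eq_iff poly_charpoly det_radial_matrix[OF assms] poly_power algebra_simps)
  moreover have "order x ?p = count_list (a # replicate (CARD('n) - 1) b) x" for x
  proof -
    have "order x [:-a, 1:] = (if x = a then 1 else 0)"
      using order_power_n_n[of a 1] by (auto intro!: order_0I)
    moreover have "order x ([:-b, 1:] ^ m) = (if x = b then m else 0)" for m
      using order_power_n_n[of b m] by (auto intro!: order_0I simp: poly_power)
    moreover have "count_list (replicate m b) x = (if x = b then m else 0)" for m
      by (induction m) auto
    moreover have "?p \<noteq> 0" by (rule no_zero_divisors) simp_all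
    ultimately show ?thesis using order_mult[of "[:-a, 1:]" "[:-b, 1:] ^ (CARD('n) - 1)" x] by auto
  qed
  ultimately show "count_list (sort (a # replicate (CARD('n) - 1) b)) x
      = order x (charpoly (radial_matrix a b e))" for x
    by (metis count_mset mset_sort)
qed (rule sorted_sort, simp)

lemma Pk_minus_radial_matrix_ge:
  fixes e :: "real^'n"
  assumes "norm e = 1" and "1 \<le> k" "k \<le> CARD('n)"
  shows "min (a + real (k - 1) * b) (real k * b) \<le> Pk_minus k (radial_matrix a b e)"
proof -
  define m where "m = CARD('n) - 1"
  have km: "k \<le> Suc m" using assms m_def by simp
  have Pk: "Pk_minus k (radial_matrix a b e) = sum_list (take k (sort (a # replicate m b)))"
    by (simp add: Pk_minus_def eig_list_radial_matrix[OF assms(1)] m_def)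
  show ?thesis
  proof (cases "a \<le> b")
    case True
    then have "sort (a # replicate m b) = a # replicate m b"
      by (intro sorted_sort_id) auto
    then show ?thesis
      unfolding Pk using assms km by (cases k) (auto simp: sum_list_replicate)
  next
    case False
    then have "sort (a # replicate m b) = replicate m b @ [a]"
      by (intro properties_for_sort) (auto simp: sorted_append)
    then show ?thesis
      unfolding Pk using km False by (cases "k = Suc m") (auto simp: sum_list_replicate)
  qed
qed

lemma eig_list_mat: "eig_list (mat c :: real^'n^'n) = replicate CARD('n) c"
proof -
  obtain i :: 'n where True by blast
  have "sort (c # replicate (CARD('n) - 1) c) = replicate CARD('n) c"
    by (simp add: Suc_diff_le flip: replicate_Suc)
  then show ?thesis
    using eig_list_radial_matrix[of "axis i 1" c c] by (simp add: radial_matrix_same)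
qed

lemma Pk_minus_mat: "k \<le> CARD('n) \<Longrightarrow> Pk_minus k (mat c :: real^'n^'n) = real k * c"
  by (simp add: Pk_minus_def eig_list_mat sum_list_replicate)

section \<open>Derivatives of radial functions\<close>

lemma grad_eqI:
  assumes "(f has_derivative (\<lambda>v. g \<bullet> v)) (at x)"
  shows "grad f x = g"
  unfolding grad_def frechet_derivative_at[OF assms, symmetric]
  by (simp add: vec_eq_iff inner_axis)

lemma hess_eqI:
  assumes "(grad f has_derivative D) (at x)"
  shows "hess f x = (\<chi> i j. D (axis i 1) $ j)"
proof -
  have "frechet_derivative (\<lambda>y. grad f y $ j) (at x) = (\<lambda>v. D v $ j)" for j
    using frechet_derivative_at[OF bounded_linear.has_derivative[OF bounded_linear_vec_nth assms]]
    by simp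
  then show ?thesis
    by (simp add: hess_def)
qed

lemma has_derivative_dist_point:
  fixes x x0 :: "real^'n"
  assumes "x \<noteq> x0"
  shows "((\<lambda>y. dist y x0) has_derivative (\<lambda>v. sgn (x - x0) \<bullet> v)) (at x)"
proof -
  have "((\<lambda>y. norm (y - x0)) has_derivative (\<lambda>v. (v - 0) \<bullet> sgn (x - x0))) (at x)"
    by (rule has_derivative_compose[OF
          has_derivative_diff[OF has_derivative_ident has_derivative_const]])
       (use has_derivative_norm[of "x - x0"] assms in simp)
  then show ?thesis by (simp add: dist_norm inner_commute)
qed

lemma has_derivative_radial:
  fixes x x0 :: "real^'n"
  assumes "x \<noteq> x0" and "(\<psi> has_real_derivative \<psi>' (dist x x0)) (at (dist x x0))"
  shows "((\<lambda>y. \<psi> (dist y x0)) has_derivative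
      (\<lambda>v. (\<psi>' (dist x x0) / dist x x0) *\<^sub>R (x - x0) \<bullet> v)) (at x)"
  using has_derivative_compose[OF has_derivative_dist_point[OF assms(1)]
      has_field_derivative_imp_has_derivative[OF assms(2)]] assms(1)
  by (simp add: sgn_div_norm dist_norm divide_inverse ac_simps)

lemma
  fixes x x0 :: "real^'n"
  assumes U: "open U" "x \<in> U" "x0 \<notin> U"
    and f: "\<And>y. y \<in> U \<Longrightarrow> f y = \<psi> (dist y x0)"
    and d1: "\<And>y. y \<in> U \<Longrightarrow> (\<psi> has_real_derivative \<psi>' (dist y x0)) (at (dist y x0))"
    and d2: "\<And>y. y \<in> U \<Longrightarrow> (\<psi>' has_real_derivative \<psi>'' (dist y x0)) (at (dist y x0))"
  shows differentiable_radial: "f differentiable (at x)"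
    and grad_radial: "grad f x = (\<psi>' (dist x x0) / dist x x0) *\<^sub>R (x - x0)"
    and differentiable_grad_radial: "grad f differentiable (at x)"
    and hess_radial:
      "hess f x = radial_matrix (\<psi>'' (dist x x0)) (\<psi>' (dist x x0) / dist x x0) (sgn (x - x0))"
proof -
  have df: "(f has_derivative (\<lambda>v. (\<psi>' (dist y x0) / dist y x0) *\<^sub>R (y - x0) \<bullet> v)) (at y)"
    if "y \<in> U" for y
  proof -
    have "y \<noteq> x0" using that U(3) by auto
    from has_derivative_radial[where \<psi>=\<psi> and \<psi>'=\<psi>', OF this d1[OF that]] show ?thesis
      by (rule has_derivative_transform_within_open[OF _ U(1) that]) (simp add: f)
  qed
  then show "f differentiable (at x)"
    using U(2) by (auto simp: differentiable_def)
  show "grad f x = (\<psi>' (dist x x0) / dist x x0) *\<^sub>R (x - x0)"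
    by (rule grad_eqI[OF df[OF U(2)]])
  define r where "r = dist x x0"
  have r: "r > 0" using U by (auto simp: r_def)
  define q' where "q' = (\<psi>'' r - \<psi>' r / r) / r"
  have "((\<lambda>t. \<psi>' t / t) has_real_derivative q') (at r)"
    using DERIV_divide[OF d2[OF U(2)] DERIV_ident] r
    by (simp add: r_def q'_def field_simps power2_eq_square)
  from has_derivative_compose[OF has_derivative_dist_point
      has_field_derivative_imp_has_derivative[OF this[unfolded r_def]]]
  have "((\<lambda>y. \<psi>' (dist y x0) / dist y x0) has_derivative (\<lambda>v. q' * (sgn (x - x0) \<bullet> v))) (at x)"
    using U by (auto simp: r_def)
  from has_derivative_scaleR[OF this
      has_derivative_diff[OF has_derivative_ident has_derivative_const[of x0]]]
  have "((\<lambda>y. (\<psi>' (dist y x0) / dist y x0) *\<^sub>R (y - x0)) has_derivative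
      (\<lambda>v. (\<psi>' r / r) *\<^sub>R v + (q' * (sgn (x - x0) \<bullet> v)) *\<^sub>R (x - x0))) (at x)"
    by (simp add: r_def)
  then have dG: "(grad f has_derivative
      (\<lambda>v. (\<psi>' r / r) *\<^sub>R v + (q' * (sgn (x - x0) \<bullet> v)) *\<^sub>R (x - x0))) (at x)"
    by (rule has_derivative_transform_within_open[OF _ U(1) U(2)]) (simp add: grad_eqI[OF df])
  then show "grad f differentiable (at x)"
    by (auto simp: differentiable_def)
  have xj: "x $ j - x0 $ j = r * sgn (x - x0) $ j" for j
    using r by (simp add: r_def dist_norm sgn_div_norm)
  have "hess f x $ i $ j = (\<psi>' r / r) * (if i = j then 1 else 0)
      + (q' * r) * (sgn (x - x0) $ i * sgn (x - x0) $ j)" for i j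
    by (simp add: hess_eqI[OF dG] inner_axis) (simp add: axis_def xj ac_simps)
  moreover have "q' * r = \<psi>'' r - \<psi>' r / r"
    using r by (simp add: q'_def)
  ultimately show
    "hess f x = radial_matrix (\<psi>'' (dist x x0)) (\<psi>' (dist x x0) / dist x x0) (sgn (x - x0))"
    by (simp add: radial_matrix_def vec_eq_iff r_def mult.assoc)
qed

section \<open>Extension of a radial function across its centre\<close>

lemma tendsto_at_right_0_comp_dist:
  fixes x0 :: "'a::metric_space"
  assumes "(g \<longlongrightarrow> l) (at_right 0)"
  shows "((\<lambda>y. g (dist y x0)) \<longlongrightarrow> l) (at x0)"
proof -
  have "((\<lambda>y. dist y x0) \<longlongrightarrow> dist x0 x0) (at x0)"
    by (intro tendsto_intros)
  then have "filterlim (\<lambda>y. dist y x0) (at_right 0) (at x0)"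
    unfolding filterlim_at by (auto simp: eventually_at_filter)
  then show ?thesis
    by (rule filterlim_compose[OF assms])
qed

lemma tendsto_radial_matrix:
  fixes e :: "'a \<Rightarrow> real^'n"
  assumes "(a \<longlongrightarrow> c) F" "(b \<longlongrightarrow> c) F" "eventually (\<lambda>x. norm (e x) = 1) F"
  shows "((\<lambda>x. radial_matrix (a x) (b x) (e x)) \<longlongrightarrow> mat c) F"
proof -
  have "((\<lambda>x. (a x - b x) * e x $ i * e x $ j) \<longlongrightarrow> 0) F" for i j
  proof (rule Lim_null_comparison)
    show "eventually (\<lambda>x. norm ((a x - b x) * e x $ i * e x $ j) \<le> \<bar>a x - b x\<bar>) F"
    proof (rule eventually_mono[OF assms(3)])
      fix x assume "norm (e x) = 1"
      then have "\<bar>e x $ l\<bar> \<le> 1" for l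
        using component_le_norm_cart[of "e x" l] by simp
      then have "\<bar>e x $ i * e x $ j\<bar> \<le> 1"
        by (simp add: abs_mult mult_le_one)
      then show "norm ((a x - b x) * e x $ i * e x $ j) \<le> \<bar>a x - b x\<bar>"
        by (simp add: abs_mult mult.assoc mult_left_le)
    qed
    show "((\<lambda>x. \<bar>a x - b x\<bar>) \<longlongrightarrow> 0) F"
      using tendsto_rabs[OF tendsto_diff[OF assms(1,2)]] by simp
  qed
  then have "((\<lambda>x. b x * (if i = j then 1 else 0) + (a x - b x) * e x $ i * e x $ j)
      \<longlongrightarrow> (if i = j then c else 0)) F" for i j
    using tendsto_add[OF tendsto_mult[OF assms(2) tendsto_const[of "if i = j then 1 else 0"]]]
    by (cases "i = j") fastforce+
  then show ?thesis
    unfolding radial_matrix_def mat_def by (intro tendsto_vec_lambda)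
qed

lemma eventually_at_right_0_in_interval:
  fixes R :: real
  assumes "0 < R"
  shows "eventually (\<lambda>t. t \<in> {0<..<R}) (at_right 0)"
  unfolding eventually_at_right_field using assms by (intro exI[of _ R]) auto

locale radial_profile =
  fixes R L c :: real and \<psi> \<psi>' \<psi>'' :: "real \<Rightarrow> real"
  assumes R_pos: "0 < R"
    and psi_deriv: "\<And>t. t \<in> {0<..<R} \<Longrightarrow> (\<psi> has_real_derivative \<psi>' t) (at t)"
    and psi'_deriv: "\<And>t. t \<in> {0<..<R} \<Longrightarrow> (\<psi>' has_real_derivative \<psi>'' t) (at t)"
    and psi''_cont: "continuous_on {0<..<R} \<psi>''"
    and psi_tendsto: "(\<psi> \<longlongrightarrow> L) (at_right 0)"
    and psi'_ratio_tendsto: "((\<lambda>t. \<psi>' t / t) \<longlongrightarrow> c) (at_right 0)"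
    and psi''_tendsto: "(\<psi>'' \<longlongrightarrow> c) (at_right 0)"
begin

definition radial_ext :: "'a::metric_space \<Rightarrow> 'a \<Rightarrow> real" where
  "radial_ext x0 y = (if y = x0 then L else \<psi> (dist y x0))"

lemma eventually_at_punctured_ball:
  fixes x0 :: "'a::metric_space"
  shows "eventually (\<lambda>y. y \<in> ball x0 R - {x0}) (at x0)"
  using eventually_at_ball'[OF R_pos, of x0 UNIV] by (auto elim: eventually_mono)

lemma
  fixes x0 :: "real^'n"
  assumes "y \<in> ball x0 R - {x0}"
  shows radial_ext_punctured: "radial_ext x0 y = \<psi> (dist y x0)"
    and psi_deriv_dist: "(\<psi> has_real_derivative \<psi>' (dist y x0)) (at (dist y x0))"
    and psi'_deriv_dist: "(\<psi>' has_real_derivative \<psi>'' (dist y x0)) (at (dist y x0))"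
  using assms by (auto simp: radial_ext_def dist_commute intro!: psi_deriv psi'_deriv)

lemma
  fixes x0 y :: "real^'n"
  assumes "y \<in> ball x0 R - {x0}"
  shows grad_radial_ext: "grad (radial_ext x0) y = (\<psi>' (dist y x0) / dist y x0) *\<^sub>R (y - x0)"
    and hess_radial_ext: "hess (radial_ext x0) y
      = radial_matrix (\<psi>'' (dist y x0)) (\<psi>' (dist y x0) / dist y x0) (sgn (y - x0))"
    and differentiable_radial_ext: "radial_ext x0 differentiable (at y)"
    and differentiable_grad_radial_ext: "grad (radial_ext x0) differentiable (at y)"
proof -
  have U: "open (ball x0 R - {x0})" "y \<in> ball x0 R - {x0}" "x0 \<notin> ball x0 R - {x0}"
    using assms by auto
  note hyps = U radial_ext_punctured psi_deriv_dist psi'_deriv_dist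
  show "grad (radial_ext x0) y = (\<psi>' (dist y x0) / dist y x0) *\<^sub>R (y - x0)"
    "hess (radial_ext x0) y
      = radial_matrix (\<psi>'' (dist y x0)) (\<psi>' (dist y x0) / dist y x0) (sgn (y - x0))"
    "radial_ext x0 differentiable (at y)" "grad (radial_ext x0) differentiable (at y)"
    by (simp_all only: grad_radial[OF hyps] hess_radial[OF hyps] differentiable_radial[OF hyps]
        differentiable_grad_radial[OF hyps])
qed

lemma psi'_tendsto_0: "(\<psi>' \<longlongrightarrow> 0) (at_right 0)"
proof -
  have "((\<lambda>t. \<psi>' t / t * t) \<longlongrightarrow> c * 0) (at_right 0)"
    by (intro tendsto_mult psi'_ratio_tendsto) (simp add: tendsto_ident_at)
  moreover have "eventually (\<lambda>t. \<psi>' t / t * t = \<psi>' t) (at_right 0)"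
    unfolding eventually_at_right_field by (intro exI[of _ 1]) auto
  ultimately show ?thesis
    using tendsto_cong by fastforce
qed

lemma has_derivative_radial_ext_center:
  fixes x0 :: "real^'n"
  shows "(radial_ext x0 has_derivative (\<lambda>v. 0)) (at x0)"
proof -
  have "((\<lambda>t. (\<psi> t - L) / t) \<longlongrightarrow> 0) (at_right 0)"
  proof (rule lhopital_right_0[where f' = \<psi>' and g' = "\<lambda>_. 1"])
    show "((\<lambda>t. \<psi> t - L) \<longlongrightarrow> 0) (at_right 0)"
      using tendsto_diff[OF psi_tendsto tendsto_const[of L]] by simp
    show "eventually (\<lambda>t. ((\<lambda>t. \<psi> t - L) has_real_derivative \<psi>' t) (at t)) (at_right 0)"
      by (rule eventually_mono[OF eventually_at_right_0_in_interval[OF R_pos]])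
         (auto intro!: derivative_eq_intros psi_deriv)
    show "((\<lambda>t. \<psi>' t / 1) \<longlongrightarrow> 0) (at_right 0)"
      using psi'_tendsto_0 by simp
  qed (auto simp: tendsto_ident_at eventually_at_filter intro!: derivative_eq_intros)
  from tendsto_at_right_0_comp_dist[OF this, of x0]
  have "((\<lambda>y. (1 / norm (y - x0)) *\<^sub>R (radial_ext x0 y - (radial_ext x0 x0 + 0))) \<longlongrightarrow> 0) (at x0)"
    by (rule Lim_transform_eventually, intro eventually_mono[OF eventually_at_punctured_ball])
       (simp add: radial_ext_def dist_norm)
  then show ?thesis
    by (simp add: has_derivative_at2)
qed

lemma grad_radial_ext_center:
  fixes x0 :: "real^'n"
  shows "grad (radial_ext x0) x0 = 0"
  by (rule grad_eqI) (simp add: has_derivative_radial_ext_center)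

lemma has_derivative_grad_radial_ext_center:
  fixes x0 :: "real^'n"
  shows "(grad (radial_ext x0) has_derivative (\<lambda>v. c *\<^sub>R v)) (at x0)"
proof -
  have "((\<lambda>t. \<bar>\<psi>' t / t - c\<bar>) \<longlongrightarrow> 0) (at_right 0)"
    using tendsto_rabs[OF tendsto_diff[OF psi'_ratio_tendsto tendsto_const[of c]]] by simp
  from tendsto_at_right_0_comp_dist[OF this, of x0]
  have "((\<lambda>y. norm ((1 / norm (y - x0)) *\<^sub>R
      (grad (radial_ext x0) y - (grad (radial_ext x0) x0 + c *\<^sub>R (y - x0))))) \<longlongrightarrow> 0) (at x0)"
  proof (rule Lim_transform_eventually, intro eventually_mono[OF eventually_at_punctured_ball])
    fix y assume y: "y \<in> ball x0 R - {x0}"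
    have "grad (radial_ext x0) y - (grad (radial_ext x0) x0 + c *\<^sub>R (y - x0))
        = (\<psi>' (dist y x0) / dist y x0 - c) *\<^sub>R (y - x0)"
      by (simp add: grad_radial_ext[OF y] grad_radial_ext_center algebra_simps)
    then show "\<bar>\<psi>' (dist y x0) / dist y x0 - c\<bar> = norm ((1 / norm (y - x0)) *\<^sub>R
        (grad (radial_ext x0) y - (grad (radial_ext x0) x0 + c *\<^sub>R (y - x0))))"
      using y by (simp add: dist_norm)
  qed
  then show ?thesis
    unfolding has_derivative_at2 tendsto_norm_zero_iff
    using bounded_linear_scaleR_right by blast
qed

lemma hess_radial_ext_center:
  fixes x0 :: "real^'n"
  shows "hess (radial_ext x0) x0 = mat c"
  by (simp add: hess_eqI[OF has_derivative_grad_radial_ext_center] mat_def axis_def vec_eq_iff)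

lemma continuous_on_hess_radial_ext:
  fixes x0 :: "real^'n"
  shows "continuous_on (ball x0 R) (hess (radial_ext x0))"
proof -
  let ?U = "ball x0 R - {x0}"
  let ?H = "\<lambda>y. radial_matrix (\<psi>'' (dist y x0)) (\<psi>' (dist y x0) / dist y x0) (sgn (y - x0))"
  have dist_U: "(\<lambda>y. dist y x0) ` ?U \<subseteq> {0<..<R}"
    by (auto simp: dist_commute)
  have "continuous_on {0<..<R} \<psi>'"
    using psi'_deriv by (meson DERIV_isCont continuous_at_imp_continuous_on)
  from continuous_on_compose2[OF this _ dist_U]
  have psi'_U: "continuous_on ?U (\<lambda>y. \<psi>' (dist y x0))"
    by (simp add: continuous_on_dist)
  from continuous_on_compose2[OF psi''_cont _ dist_U]
  have psi''_U: "continuous_on ?U (\<lambda>y. \<psi>'' (dist y x0))"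
    by (simp add: continuous_on_dist)
  have "continuous_on ?U ?H"
    unfolding radial_matrix_def
    by (intro continuous_on_vec_lambda continuous_intros psi'_U psi''_U) auto
  then have "continuous_on ?U (hess (radial_ext x0))"
    by (rule continuous_on_eq) (simp add: hess_radial_ext)
  then have "isCont (hess (radial_ext x0)) y" if "y \<in> ?U" for y
    using that continuous_on_eq_continuous_at[OF open_delete[OF open_ball]] by blast
  moreover have "isCont (hess (radial_ext x0)) x0"
  proof -
    have "(?H \<longlongrightarrow> mat c) (at x0)"
    proof (rule tendsto_radial_matrix)
      show "((\<lambda>y. \<psi>'' (dist y x0)) \<longlongrightarrow> c) (at x0)"
        by (rule tendsto_at_right_0_comp_dist[OF psi''_tendsto])
      show "((\<lambda>y. \<psi>' (dist y x0) / dist y x0) \<longlongrightarrow> c) (at x0)"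
        by (rule tendsto_at_right_0_comp_dist[OF psi'_ratio_tendsto])
      show "eventually (\<lambda>y. norm (sgn (y - x0)) = 1) (at x0)"
        by (rule eventually_mono[OF eventually_at_punctured_ball]) (simp add: norm_sgn)
    qed
    moreover have "eventually (\<lambda>y. ?H y = hess (radial_ext x0) y) (at x0)"
      by (rule eventually_mono[OF eventually_at_punctured_ball]) (simp add: hess_radial_ext)
    ultimately show ?thesis
      unfolding isCont_def hess_radial_ext_center by (rule Lim_transform_eventually)
  qed
  ultimately show ?thesis
    by (metis continuous_at_imp_continuous_on Diff_iff singletonD)
qed

lemma C2_on_radial_ext:
  fixes x0 :: "real^'n"
  shows "C2_on (ball x0 R) (radial_ext x0)"
  unfolding C2_on_def
proof (intro conjI ballI continuous_on_hess_radial_ext)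
  fix y assume y: "y \<in> ball x0 R"
  show "radial_ext x0 differentiable (at y)"
  proof (cases "y = x0")
    case True
    then show ?thesis
      using has_derivative_radial_ext_center by (auto simp: differentiable_def)
  qed (use y in \<open>auto intro: differentiable_radial_ext\<close>)
  show "grad (radial_ext x0) differentiable (at y)"
  proof (cases "y = x0")
    case True
    then show ?thesis
      using has_derivative_grad_radial_ext_center by (auto simp: differentiable_def)
  qed (use y in \<open>auto intro: differentiable_grad_radial_ext\<close>)
qed

end

section \<open>The radial ODE\<close>

lemma DERIV_ge_power_imp_ge:
  fixes \<phi> \<phi>' :: "real \<Rightarrow> real"
  assumes t: "0 < t"
    and deriv: "\<And>s. s \<in> {0<..t} \<Longrightarrow> (\<phi> has_real_derivative \<phi>' s) (at s)"
    and ge: "\<And>s. s \<in> {0<..t} \<Longrightarrow> c * s ^ m \<le> \<phi>' s"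
    and lim: "(\<phi> \<longlongrightarrow> 0) (at_right 0)"
  shows "c * t ^ Suc m / Suc m \<le> \<phi> t"
proof -
  define g where "g s = \<phi> s - c * s ^ Suc m / Suc m" for s
  have g_deriv: "(g has_real_derivative \<phi>' s - c * s ^ m) (at s)" if "s \<in> {0<..t}" for s
  proof -
    have "((\<lambda>s. c * s ^ Suc m / Suc m) has_real_derivative c * (Suc m * s ^ m) / Suc m) (at s)"
      by (intro DERIV_cdivide DERIV_cmult) (use DERIV_pow[of "Suc m" s] in simp)
    then show ?thesis
      unfolding g_def using DERIV_diff[OF deriv[OF that]] by simp
  qed
  have "g s \<le> g t" if s: "0 < s" "s < t" for s
  proof (rule DERIV_nonneg_imp_increasing_open[of s t g])
    show "continuous_on {s..t} g"
      using s g_deriv by (meson DERIV_isCont continuous_at_imp_continuous_on greaterThanAtMost_iff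
          atLeastAtMost_iff less_le_trans)
  qed (use s g_deriv ge in \<open>force+\<close>)
  then have "eventually (\<lambda>s. g s \<le> g t) (at_right 0)"
    unfolding eventually_at_right_field using t by (intro exI[of _ t]) auto
  moreover have "(g \<longlongrightarrow> 0 - c * 0 ^ Suc m / Suc m) (at_right 0)"
    unfolding g_def by (intro tendsto_intros lim) simp
  ultimately have "0 \<le> g t"
    using tendsto_upperbound[OF _ _ trivial_limit_at_right_real] by fastforce
  then show ?thesis
    by (simp add: g_def)
qed

lemma convergent_at_right_0_if_deriv_bounded:
  fixes f f' :: "real \<Rightarrow> real"
  assumes \<delta>: "0 < \<delta>"
    and deriv: "\<And>t. t \<in> {0<..<\<delta>} \<Longrightarrow> (f has_real_derivative f' t) (at t)"
    and bound: "\<And>t. t \<in> {0<..<\<delta>} \<Longrightarrow> \<bar>f' t\<bar> \<le> M"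
  obtains L where "(f \<longlongrightarrow> L) (at_right 0)"
proof -
  have "M-lipschitz_on {0<..<\<delta>} f"
  proof (rule lipschitz_onI)
    show "dist (f s) (f t) \<le> M * dist s t" if "s \<in> {0<..<\<delta>}" "t \<in> {0<..<\<delta>}" for s t
      using field_differentiable_bound[of "{0<..<\<delta>}" f f' M] that deriv bound
      by (auto simp: dist_norm intro: has_field_derivative_at_within)
    show "0 \<le> M"
      using bound[of "\<delta> / 2"] \<delta> by simp
  qed
  from uniformly_continuous_on_extension_on_closure[OF lipschitz_on_uniformly_continuous[OF this]]
  obtain g where g: "continuous_on {0..\<delta>} g" "\<And>t. t \<in> {0<..<\<delta>} \<Longrightarrow> f t = g t"
    using \<delta> by (metis closure_greaterThanLessThan uniformly_continuous_imp_continuous)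
  then have "(g \<longlongrightarrow> g 0) (at_right 0)"
    using \<delta> by (simp add: continuous_on_def at_within_Icc_at_right[symmetric])
  moreover have "eventually (\<lambda>t. g t = f t) (at_right 0)"
    unfolding eventually_at_right_field using \<delta> g(2) by (intro exI[of _ \<delta>]) auto
  ultimately show ?thesis
    using that Lim_transform_eventually by blast
qed

lemma drift_absorption:
  fixes k :: nat and r R h hs \<xi> p :: real
  assumes r: "0 < r" "r \<le> R" and k: "1 \<le> k" and h: "0 \<le> h" "h * R < k"
    and hs: "h \<le> hs" "h / (k - h * R) \<le> hs"
    and \<xi>: "0 \<le> \<xi>" and p: "\<xi> * r / k \<le> p"
  shows "\<xi> / (1 + hs * R) \<le> min (\<xi> + hs * p) (k * (p / r)) - h * p"
proof -
  define D where "D = 1 + hs * R"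
  have D: "1 \<le> D"
    using r h hs by (simp add: D_def)
  have p0: "0 \<le> p"
    using p r \<xi>
    by (meson divide_nonneg_nonneg mult_nonneg_nonneg of_nat_0_le_iff less_imp_le order_trans)
  have "\<xi> / D \<le> \<xi>"
    using D \<xi> by (simp add: divide_le_eq mult_le_cancel_left1)
  also have "\<dots> \<le> \<xi> + hs * p - h * p"
    using hs p0 by (simp add: mult_right_mono flip: left_diff_distrib)
  finally have first: "\<xi> / D \<le> \<xi> + hs * p - h * p" .
  have khr: "k - h * R \<le> k - h * r"
    using h r by (simp add: mult_left_mono)
  have hs': "h \<le> hs * (k - h * R)"
    using hs h by (simp add: pos_divide_le_eq)
  have "k \<le> (k - h * R) + R * (hs * (k - h * R))"
    using mult_left_mono[OF hs', of R] r by (simp add: algebra_simps)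
  also have "\<dots> = (k - h * R) * D"
    by (simp add: D_def algebra_simps)
  also have "\<dots> \<le> (k - h * r) * D"
    using khr D by (intro mult_right_mono) auto
  finally have "\<xi> * k / (k * D) \<le> \<xi> * ((k - h * r) * D) / (k * D)"
    using \<xi> k D by (intro divide_right_mono mult_left_mono) auto
  also have "\<xi> * k / (k * D) = \<xi> / D"
    using k by simp
  also have "\<xi> * ((k - h * r) * D) / (k * D) = (\<xi> * r / k) * ((k - h * r) / r)"
    using r D by simp
  also have "\<dots> \<le> p * ((k - h * r) / r)"
    using p r khr h by (intro mult_right_mono) auto
  also have "\<dots> = k * (p / r) - h * p"
    using r by (simp add: diff_divide_distrib algebra_simps)
  finally show ?thesis
    using first by (simp add: D_def)
qed

locale radial_ode =
  fixes k :: nat and hs R :: real and \<xi> \<psi> \<psi>' \<psi>'' :: "real \<Rightarrow> real"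
  assumes k_pos: "1 \<le> k" and hs_nonneg: "0 \<le> hs" and R_pos: "0 < R"
    and xi_antimono: "\<And>s t. 0 < s \<Longrightarrow> s \<le> t \<Longrightarrow> \<xi> t \<le> \<xi> s"
    and xi_nonneg: "\<And>t. 0 < t \<Longrightarrow> 0 \<le> \<xi> t"
    and psi_deriv: "\<And>t. t \<in> {0<..<R} \<Longrightarrow> (\<psi> has_real_derivative \<psi>' t) (at t)"
    and psi'_deriv: "\<And>t. t \<in> {0<..<R} \<Longrightarrow> (\<psi>' has_real_derivative \<psi>'' t) (at t)"
    and psi''_cont: "continuous_on {0<..<R} \<psi>''"
    and flux_deriv: "\<And>t. t \<in> {0<..<R} \<Longrightarrow>
       ((\<lambda>s. s ^ (k - 1) * exp (- hs * s) * \<psi>' s) has_real_derivative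
          (exp (- hs * t) * t ^ (k - 1) * \<xi> t)) (at t)"
    and psi'_weighted_tendsto_0: "((\<lambda>t. t ^ (k - 1) * \<psi>' t) \<longlongrightarrow> 0) (at_right 0)"
begin

lemma flux_tendsto_0: "((\<lambda>s. s ^ (k - 1) * exp (- hs * s) * \<psi>' s) \<longlongrightarrow> 0) (at_right 0)"
proof -
  have "((\<lambda>s. (s ^ (k - 1) * \<psi>' s) * exp (- hs * s)) \<longlongrightarrow> 0 * exp (- hs * 0)) (at_right 0)"
    by (intro tendsto_intros psi'_weighted_tendsto_0)
  then show ?thesis
    by (simp add: ac_simps)
qed

lemma psi''_eq:
  assumes t: "t \<in> {0<..<R}"
  shows "\<psi>'' t = \<xi> t + hs * \<psi>' t - (k - 1) * \<psi>' t / t"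
proof -
  define m where "m = k - 1"
  define E where "E = exp (- hs * t)"
  have "((\<lambda>s. s ^ m * exp (- hs * s) * \<psi>' s) has_real_derivative
      m * t ^ (m - 1) * E * \<psi>' t + t ^ m * (E * (- hs)) * \<psi>' t + t ^ m * E * \<psi>'' t) (at t)"
    unfolding E_def
    by (rule derivative_eq_intros DERIV_pow psi'_deriv[OF t] refl | simp add: algebra_simps)+
  from DERIV_unique[OF this flux_deriv[OF t, folded m_def]]
  have "t ^ m * E * (\<psi>'' t - \<xi> t - hs * \<psi>' t + m * \<psi>' t / t) = 0"
    using t by (cases m) (auto simp: E_def field_simps)
  then show ?thesis
    using t by (simp add: E_def m_def)
qed

lemma psi'_ge:
  assumes t: "t \<in> {0<..<R}"
  shows "\<xi> t * t / k \<le> \<psi>' t"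
proof -
  have "exp (- hs * t) * \<xi> t * t ^ Suc (k - 1) / Suc (k - 1)
      \<le> t ^ (k - 1) * exp (- hs * t) * \<psi>' t"
  proof (rule DERIV_ge_power_imp_ge[OF _ flux_deriv _ flux_tendsto_0])
    fix s assume s: "s \<in> {0<..t}"
    have "exp (- hs * t) * \<xi> t \<le> exp (- hs * s) * \<xi> s"
      using s t hs_nonneg xi_nonneg xi_antimono by (intro mult_mono) (auto simp: mult_left_mono)
    then show "exp (- hs * t) * \<xi> t * s ^ (k - 1) \<le> exp (- hs * s) * s ^ (k - 1) * \<xi> s"
      using s by (simp add: mult_right_mono ac_simps)
  qed (use t in auto)
  then have "t ^ (k - 1) * exp (- hs * t) * (\<xi> t * t / k) \<le> t ^ (k - 1) * exp (- hs * t) * \<psi>' t"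
    using k_pos power_Suc[of t "k - 1"] by (simp add: field_simps)
  moreover have "0 < t ^ (k - 1) * exp (- hs * t)"
    using t by simp
  ultimately show ?thesis
    by (meson mult_le_cancel_left_pos)
qed

lemma psi'_nonneg:
  assumes t: "t \<in> {0<..<R}"
  shows "0 \<le> \<psi>' t"
proof -
  have "0 \<le> \<xi> t * t / k"
    using t xi_nonneg[of t] by simp
  then show ?thesis
    using psi'_ge[OF t] by linarith
qed

lemma psi'_le:
  assumes M: "\<And>s. 0 < s \<Longrightarrow> \<xi> s \<le> M" and t: "t \<in> {0<..<R}"
  shows "\<psi>' t \<le> M * exp (hs * t) * t / k"
proof -
  have "- M * t ^ Suc (k - 1) / Suc (k - 1) \<le> - (t ^ (k - 1) * exp (- hs * t) * \<psi>' t)"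
  proof (rule DERIV_ge_power_imp_ge[OF _ DERIV_minus[OF flux_deriv]])
    fix s assume s: "s \<in> {0<..t}"
    have "exp (- hs * s) * \<xi> s \<le> 1 * M"
      using s t hs_nonneg xi_nonneg M by (intro mult_mono) auto
    then show "- M * s ^ (k - 1) \<le> - (exp (- hs * s) * s ^ (k - 1) * \<xi> s)"
      using s by (simp add: mult_right_mono ac_simps)
  qed (use t tendsto_minus[OF flux_tendsto_0] in auto)
  then have "t ^ (k - 1) * exp (- hs * t) * \<psi>' t
      \<le> t ^ (k - 1) * exp (- hs * t) * (M * exp (hs * t) * t / k)"
    using k_pos power_Suc[of t "k - 1"] by (simp add: field_simps exp_minus)
  moreover have "0 < t ^ (k - 1) * exp (- hs * t)"
    using t by simp
  ultimately show ?thesis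
    by (meson mult_le_cancel_left_pos)
qed

context
  assumes xi_cont: "continuous_on {0..} \<xi>"
begin

lemma xi_tendsto: "(\<xi> \<longlongrightarrow> \<xi> 0) (at_right 0)"
  using xi_cont by (auto simp: continuous_on_def intro: tendsto_within_subset)

lemma xi_le_xi0: "0 < s \<Longrightarrow> \<xi> s \<le> \<xi> 0"
  using xi_antimono xi_tendsto
  by (intro tendsto_lowerbound[OF xi_tendsto _ trivial_limit_at_right_real])
     (auto simp: eventually_at_right_field intro!: exI[of _ s])

lemma psi'_ratio_tendsto: "((\<lambda>t. \<psi>' t / t) \<longlongrightarrow> \<xi> 0 / k) (at_right 0)"
proof (rule tendsto_sandwich)
  show "eventually (\<lambda>t. \<xi> t / k \<le> \<psi>' t / t) (at_right 0)"
    by (rule eventually_mono[OF eventually_at_right_0_in_interval[OF R_pos]])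
       (use psi'_ge in \<open>auto simp: field_simps\<close>)
  show "eventually (\<lambda>t. \<psi>' t / t \<le> \<xi> 0 * exp (hs * t) / k) (at_right 0)"
    by (rule eventually_mono[OF eventually_at_right_0_in_interval[OF R_pos]])
       (use psi'_le[OF xi_le_xi0] in \<open>auto simp: field_simps\<close>)
  show "((\<lambda>t. \<xi> t / k) \<longlongrightarrow> \<xi> 0 / k) (at_right 0)"
    using k_pos by (intro tendsto_intros xi_tendsto) simp
  have "((\<lambda>t. \<xi> 0 * exp (hs * t) / k) \<longlongrightarrow> \<xi> 0 * exp (hs * 0) / k) (at_right 0)"
    using k_pos by (intro tendsto_intros) simp
  then show "((\<lambda>t. \<xi> 0 * exp (hs * t) / k) \<longlongrightarrow> \<xi> 0 / k) (at_right 0)"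
    by simp
qed

lemma psi''_tendsto: "(\<psi>'' \<longlongrightarrow> \<xi> 0 / k) (at_right 0)"
proof -
  have "((\<lambda>t. \<xi> t + hs * (\<psi>' t / t * t) - (k - 1) * (\<psi>' t / t)) \<longlongrightarrow>
      \<xi> 0 + hs * (\<xi> 0 / k * 0) - (k - 1) * (\<xi> 0 / k)) (at_right 0)"
    by (intro tendsto_intros xi_tendsto psi'_ratio_tendsto)
  moreover have "\<xi> 0 + hs * (\<xi> 0 / k * 0) - (k - 1) * (\<xi> 0 / k) = \<xi> 0 / k"
    using k_pos by (simp add: field_simps of_nat_diff)
  moreover have
    "eventually (\<lambda>t. \<xi> t + hs * (\<psi>' t / t * t) - (k - 1) * (\<psi>' t / t) = \<psi>'' t) (at_right 0)"
    by (rule eventually_mono[OF eventually_at_right_0_in_interval[OF R_pos]]) (simp add: psi''_eq)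
  ultimately show ?thesis
    using Lim_transform_eventually by fastforce
qed

lemma psi_convergent:
  obtains L where "(\<psi> \<longlongrightarrow> L) (at_right 0)"
proof (rule convergent_at_right_0_if_deriv_bounded[OF R_pos psi_deriv])
  fix t assume t: "t \<in> {0<..<R}"
  have "\<psi>' t \<le> \<xi> 0 * exp (hs * t) * t / k"
    by (rule psi'_le[OF xi_le_xi0 t])
  also have "\<dots> \<le> \<xi> 0 * exp (hs * R) * R / k"
    using t hs_nonneg xi_le_xi0[of t] xi_nonneg[of t]
    by (intro divide_right_mono mult_mono mult_left_mono) (auto intro: mult_left_mono)
  finally show "\<bar>\<psi>' t\<bar> \<le> \<xi> 0 * exp (hs * R) * R / k"
    using psi'_nonneg[OF t] by simp
qed

lemma radial_profile:
  assumes "(\<psi> \<longlongrightarrow> L) (at_right 0)"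
  shows "radial_profile R L (\<xi> 0 / k) \<psi> \<psi>' \<psi>''"
  by unfold_locales
     (use R_pos psi_deriv psi'_deriv psi''_cont assms psi'_ratio_tendsto psi''_tendsto in auto)

end

end

locale drift_radial_ode = radial_ode +
  fixes h :: real
  assumes h_nonneg: "0 \<le> h" and hR_less_k: "h * R < k"
    and hs_ge: "max h (h / (k - h * R)) \<le> hs"
begin

lemma Pk_minus_hess_radial_ge:
  fixes x x0 :: "real^'n"
  assumes n: "k \<le> CARD('n)"
    and U: "open U" "x \<in> U" "U \<subseteq> ball x0 R - {x0}"
    and f: "\<And>y. y \<in> U \<Longrightarrow> f y = \<psi> (dist y x0)"
  shows "\<xi> (dist x x0) / (1 + hs * R) \<le> Pk_minus k (hess f x) - h * norm (grad f x)"
proof -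
  have dist_U: "dist y x0 \<in> {0<..<R}" if "y \<in> U" for y
    using U(3) that by (auto simp: dist_commute)
  have x0: "x0 \<notin> U"
    using U(3) by auto
  note psi_derivs = psi_deriv[OF dist_U] psi'_deriv[OF dist_U]
  define r where "r = dist x x0"
  have r: "r \<in> {0<..<R}"
    using dist_U[OF U(2)] by (simp add: r_def)
  have e: "norm (sgn (x - x0)) = 1"
    using U(2) x0 by (auto simp: norm_sgn)
  have "norm (grad f x) = \<psi>' r"
    using r psi'_nonneg[OF r] by (simp add: grad_radial[OF U(1,2) x0 f psi_derivs] r_def dist_norm)
  moreover have "min (\<xi> r + hs * \<psi>' r) (k * (\<psi>' r / r)) \<le> Pk_minus k (hess f x)"
    using Pk_minus_radial_matrix_ge[OF e k_pos n, of "\<psi>'' r" "\<psi>' r / r"]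
      hess_radial[OF U(1,2) x0 f psi_derivs]
    by (simp add: psi''_eq[OF r] flip: r_def)
  moreover have "\<xi> r / (1 + hs * R) \<le> min (\<xi> r + hs * \<psi>' r) (k * (\<psi>' r / r)) - h * \<psi>' r"
    using r k_pos h_nonneg hR_less_k hs_ge xi_nonneg[of r] psi'_ge[OF r]
    by (intro drift_absorption) auto
  ultimately show ?thesis
    by (simp add: r_def)
qed

lemma C2_extension_Pk_minus_ge:
  fixes x0 :: "real^'n"
  assumes n: "k \<le> CARD('n)" and xi_cont: "continuous_on {0..} \<xi>"
  shows "\<exists>L. (\<psi> \<longlongrightarrow> L) (at_right 0) \<and>
    C2_on (ball x0 R) (\<lambda>y. if y = x0 then L else \<psi> (dist y x0)) \<and>
    (\<forall>x \<in> ball x0 R. \<xi> (dist x x0) / (1 + hs * R) \<le>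
      Pk_minus k (hess (\<lambda>y. if y = x0 then L else \<psi> (dist y x0)) x)
        - h * norm (grad (\<lambda>y. if y = x0 then L else \<psi> (dist y x0)) x))"
proof -
  obtain L where L: "(\<psi> \<longlongrightarrow> L) (at_right 0)"
    using psi_convergent[OF xi_cont] by blast
  interpret P: radial_profile R L "\<xi> 0 / k" \<psi> \<psi>' \<psi>''
    by (rule radial_profile[OF xi_cont L])
  have w: "(\<lambda>y. if y = x0 then L else \<psi> (dist y x0)) = P.radial_ext x0"
    by (simp add: fun_eq_iff P.radial_ext_def)
  have "\<xi> (dist x x0) / (1 + hs * R)
      \<le> Pk_minus k (hess (P.radial_ext x0) x) - h * norm (grad (P.radial_ext x0) x)"
    if x: "x \<in> ball x0 R" for x
  proof (cases "x = x0")
    case True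
    have "1 \<le> 1 + hs * R"
      using hs_nonneg R_pos by simp
    then have "\<xi> 0 / (1 + hs * R) \<le> \<xi> 0"
      using xi_le_xi0[OF xi_cont, of 1] xi_nonneg[of 1]
      by (simp add: divide_le_eq mult_le_cancel_left1)
    then show ?thesis
      using True k_pos
      by (simp add: P.hess_radial_ext_center P.grad_radial_ext_center Pk_minus_mat[OF n])
  next
    case False
    show ?thesis
      by (rule Pk_minus_hess_radial_ge[OF n open_delete[OF open_ball] _ subset_refl])
         (use x False in \<open>auto simp: P.radial_ext_punctured\<close>)
  qed
  with L P.C2_on_radial_ext[of x0] show ?thesis
    unfolding w[symmetric] by blast
qed

end

theorem mainTheorem4:
  fixes k :: nat and R h hs :: real
    and \<xi> \<psi> \<psi>' \<psi>'' :: "real \<Rightarrow> real"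
    and x0 :: "real^'n"
  assumes n2: "CARD('n) \<ge> 2"
    and k: "1 \<le> k" "k \<le> CARD('n)"
    and R: "R > 0"
    and h: "h \<ge> 0" and hs: "hs \<ge> 0"
    and hR: "h * R < real k"
    and hs_ge: "hs \<ge> max h (h / (real k - h * R))"
    and xi_cont: "continuous_on {0<..} \<xi>"
    and xi_mono: "\<And>s t. 0 < s \<Longrightarrow> s \<le> t \<Longrightarrow> \<xi> t \<le> \<xi> s"
    and xi_nonneg: "\<And>t. 0 < t \<Longrightarrow> \<xi> t \<ge> 0"
    and xi_int: "\<exists>\<delta>>0. (\<lambda>t. t ^ (k - 1) * \<xi> t) integrable_on {0<..\<delta>}"
    and psi_d1: "\<And>t. t \<in> {0<..<R} \<Longrightarrow> (\<psi> has_real_derivative \<psi>' t) (at t)"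
    and psi_d2: "\<And>t. t \<in> {0<..<R} \<Longrightarrow> (\<psi>' has_real_derivative \<psi>'' t) (at t)"
    and psi_C2: "continuous_on {0<..<R} \<psi>''"
    and ode: "\<And>t. t \<in> {0<..<R} \<Longrightarrow>
       ((\<lambda>s. s ^ (k - 1) * exp (- hs * s) * \<psi>' s) has_real_derivative
          (exp (- hs * t) * t ^ (k - 1) * \<xi> t)) (at t)"
    and lim0: "((\<lambda>t. t ^ (k - 1) * \<psi>' t) \<longlongrightarrow> 0) (at_right 0)"
  shows "(\<forall>x \<in> ball x0 R - {x0}.
            Pk_minus k (hess (\<lambda>y. \<psi> (dist y x0)) x)
              - h * norm (grad (\<lambda>y. \<psi> (dist y x0)) x)
            \<ge> \<xi> (dist x x0) / (1 + hs * R))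
       \<and> (continuous_on {0..} \<xi> \<longrightarrow>
            (\<exists>L. (\<psi> \<longlongrightarrow> L) (at_right 0) \<and>
               C2_on (ball x0 R) (\<lambda>y. if y = x0 then L else \<psi> (dist y x0)) \<and>
               (\<forall>x \<in> ball x0 R.
                  Pk_minus k (hess (\<lambda>y. if y = x0 then L else \<psi> (dist y x0)) x)
                    - h * norm (grad (\<lambda>y. if y = x0 then L else \<psi> (dist y x0)) x)
                  \<ge> \<xi> (dist x x0) / (1 + hs * R))))"
proof -
  interpret drift_radial_ode k hs R \<xi> \<psi> \<psi>' \<psi>'' h
    by unfold_locales (use k R h hs hR hs_ge xi_mono xi_nonneg psi_d1 psi_d2 psi_C2 ode lim0 in auto)
  have "\<forall>x \<in> ball x0 R - {x0}. \<xi> (dist x x0) / (1 + hs * R)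
      \<le> Pk_minus k (hess (\<lambda>y. \<psi> (dist y x0)) x) - h * norm (grad (\<lambda>y. \<psi> (dist y x0)) x)"
    by (intro ballI Pk_minus_hess_radial_ge[OF k(2) open_delete[OF open_ball]]) auto
  with C2_extension_Pk_minus_ge[OF k(2)] show ?thesis
    by blast
qed

end
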